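(* Let $\epsilon>0$, $c_\epsilon=4/\epsilon$, weights $w_i>0$ with $\sum_{i=1}^Nw_i=1$, and $\gamma>0$. Let $C_i\in\mathrm{Sym}^+(\mathcal H)$ with $0\le C_i\le\gamma I$, $i=1,\dots,N$. Define $\mathcal F:\mathrm{Sym}^+(\mathcal H)\to\mathrm{Sym}^+(\mathcal H)$ by $$\mathcal F(X)=\Big(I+(I+c_\epsilon^2X^2)^{1/2}\Big)^{1/2}\Big[\sum_{i=1}^Nw_iC_i^{1/2}\Big(I+\big(I+c_\epsilon^2C_i^{1/2}XC_i^{1/2}\big)^{1/2}\Big)^{-1}C_i^{1/2}\Big]\Big(I+(I+c_\epsilon^2X^2)^{1/2}\Big)^{1/2}.$$ Let $X\in\mathrm{Sym}^+(\mathcal H)$ with $0\le X\le\gamma I$, and assume either (i) $X$ is strictly positive, or (ii) $X$ and all $C_i$ are compact. Then $0\le\mathcal F(X)\le\gamma I$.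
   Context: $\mathcal H$ real separable Hilbert space; $\mathrm{Sym}^+(\mathcal H)$ positive bounded self-adjoint operators; $A\le B$ means $B-A\in\mathrm{Sym}^+(\mathcal H)$; strictly positive means $\langle Xx,x\rangle>0$ for all $x\ne0$. *)

theory Defs
  imports "HOL-Analysis.Analysis"
begin

definition self_adjoint :: "('a::real_inner \<Rightarrow>\<^sub>L 'a) \<Rightarrow> bool" where
  "self_adjoint A \<longleftrightarrow> (\<forall>x y. inner (A x) y = inner x (A y))"

definition pos_op :: "('a::real_inner \<Rightarrow>\<^sub>L 'a) \<Rightarrow> bool" where
  "pos_op A \<longleftrightarrow> self_adjoint A \<and> (\<forall>x. 0 \<le> inner (A x) x)"

definition op_le :: "('a::real_inner \<Rightarrow>\<^sub>L 'a) \<Rightarrow> ('a \<Rightarrow>\<^sub>L 'a) \<Rightarrow> bool" where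
  "op_le A B \<longleftrightarrow> pos_op (B - A)"

definition strictly_pos :: "('a::real_inner \<Rightarrow>\<^sub>L 'a) \<Rightarrow> bool" where
  "strictly_pos X \<longleftrightarrow> (\<forall>x. x \<noteq> 0 \<longrightarrow> 0 < inner (X x) x)"

definition compact_op :: "('a::real_normed_vector \<Rightarrow>\<^sub>L 'a) \<Rightarrow> bool" where
  "compact_op A \<longleftrightarrow> compact (closure (blinfun_apply A ` ball 0 1))"

definition op_sqrt :: "('a::real_inner \<Rightarrow>\<^sub>L 'a) \<Rightarrow> ('a \<Rightarrow>\<^sub>L 'a)" where
  "op_sqrt A = (THE S. pos_op S \<and> S o\<^sub>L S = A)"

definition op_inv :: "('a::real_normed_vector \<Rightarrow>\<^sub>L 'a) \<Rightarrow> ('a \<Rightarrow>\<^sub>L 'a)" where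
  "op_inv A = (THE B. A o\<^sub>L B = id_blinfun \<and> B o\<^sub>L A = id_blinfun)"

definition opF :: "real \<Rightarrow> nat \<Rightarrow> (nat \<Rightarrow> real) \<Rightarrow> (nat \<Rightarrow> ('a::real_inner \<Rightarrow>\<^sub>L 'a))
                     \<Rightarrow> ('a \<Rightarrow>\<^sub>L 'a) \<Rightarrow> ('a \<Rightarrow>\<^sub>L 'a)" where
  "opF c N w C X =
    (let T = op_sqrt (id_blinfun + op_sqrt (id_blinfun + c\<^sup>2 *\<^sub>R (X o\<^sub>L X)));
         S = (\<Sum>i=1..N. w i *\<^sub>R
               (op_sqrt (C i) o\<^sub>L
                op_inv (id_blinfun + op_sqrt (id_blinfun + c\<^sup>2 *\<^sub>R (op_sqrt (C i) o\<^sub>L X o\<^sub>L op_sqrt (C i))))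
                o\<^sub>L op_sqrt (C i)))
     in T o\<^sub>L S o\<^sub>L T)"

end

(*
  Write F(X) = T S T with T = (I + R)^(1/2), R = (I + c^2 X^2)^(1/2), and
  S = sum_i w_i A_i Z_i^(-1) A_i, where A_i = C_i^(1/2) and Z_i = I + (I + c^2 A_i X A_i)^(1/2).
  As the w_i form a convex combination, it suffices that 0 <= T A Z^(-1) A T <= gamma I for
  each term.  For a vector x put y = Z^(-1) A T x and q = <Z^(-1) A T x, A T x>.  Then
  q = <Z y, y> >= 0 and q = <T A y, x>, so q^2 <= |T A y|^2 |x|^2, while
  |T A y|^2 = <C y, y> + <A R A y, y> <= gamma <y, y> + gamma <(I + c^2 A X A)^(1/2) y, y> = gamma q,
  using A R A <= gamma (I + c^2 A X A)^(1/2), a consequence of the operator monotonicity of the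
  square root.  Hence q <= gamma |x|^2.  Square roots are built from the binomial series of
  (1 - t)^(1/2), the inverses of Z >= I from the Neumann series.
*)

theory Submission
  imports Defs "HOL-Computational_Algebra.Formal_Power_Series"
begin

section \<open>Positive operators\<close>

lemma self_adjointD: "self_adjoint A \<Longrightarrow> inner (A x) y = inner x (A y)"
  by (simp add: self_adjoint_def)

lemma pos_op_self_adjoint: "pos_op A \<Longrightarrow> self_adjoint A"
  by (simp add: pos_op_def)

lemma pos_op_inner_nonneg: "pos_op A \<Longrightarrow> 0 \<le> inner (A x) x"
  by (simp add: pos_op_def)

lemma op_le_scaled_id_iff:
  "op_le A (g *\<^sub>R id_blinfun) \<longleftrightarrow> self_adjoint A \<and> (\<forall>x. inner (A x) x \<le> g * (norm x)\<^sup>2)"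
  by (auto simp: op_le_def pos_op_def self_adjoint_def blinfun.diff_left blinfun.scaleR_left
      inner_diff_left inner_diff_right power2_norm_eq_inner)

lemma op_le_scaled_id_inner: "op_le A (g *\<^sub>R id_blinfun) \<Longrightarrow> inner (A x) x \<le> g * (norm x)\<^sup>2"
  by (simp add: op_le_scaled_id_iff)

lemma blinfun_compose_assoc: "(A o\<^sub>L B) o\<^sub>L C = A o\<^sub>L (B o\<^sub>L C)"
  by (rule blinfun_eqI) simp

lemma blinfun_compose_id_left [simp]: "id_blinfun o\<^sub>L A = A"
  by (rule blinfun_eqI) simp

lemma blinfun_compose_id_right [simp]: "A o\<^sub>L id_blinfun = A"
  by (rule blinfun_eqI) simp

lemmas blinfun_compose_simps =
  bounded_bilinear_blinfun_compose[THEN bounded_bilinear.add_left]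
  bounded_bilinear_blinfun_compose[THEN bounded_bilinear.add_right]
  bounded_bilinear_blinfun_compose[THEN bounded_bilinear.diff_left]
  bounded_bilinear_blinfun_compose[THEN bounded_bilinear.diff_right]
  bounded_bilinear_blinfun_compose[THEN bounded_bilinear.scaleR_left]
  bounded_bilinear_blinfun_compose[THEN bounded_bilinear.scaleR_right]
  bounded_bilinear_blinfun_compose[THEN bounded_bilinear.sum_left]
  bounded_bilinear_blinfun_compose[THEN bounded_bilinear.sum_right]

lemma inner_apply_le_norm: "inner (A x) x \<le> norm A * (norm x)\<^sup>2"
  for A :: "'a::real_inner \<Rightarrow>\<^sub>L 'a"
proof -
  have "inner (A x) x \<le> norm (A x) * norm x" by (rule norm_cauchy_schwarz)
  also have "\<dots> \<le> norm A * norm x * norm x" by (simp add: mult_right_mono norm_blinfun)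
  finally show ?thesis by (simp add: power2_eq_square ac_simps)
qed

lemma norm_apply_sq_eq_inner_square:
  "self_adjoint S \<Longrightarrow> (norm (S x))\<^sup>2 = inner ((S o\<^sub>L S) x) x"
  by (simp add: power2_norm_eq_inner self_adjointD inner_commute)

lemma self_adjoint_id: "self_adjoint (id_blinfun :: 'a::real_inner \<Rightarrow>\<^sub>L 'a)"
  by (simp add: self_adjoint_def)

lemma self_adjoint_zero: "self_adjoint (0 :: 'a::real_inner \<Rightarrow>\<^sub>L 'a)"
  by (simp add: self_adjoint_def)

lemma self_adjoint_add: "self_adjoint A \<Longrightarrow> self_adjoint B \<Longrightarrow> self_adjoint (A + B)"
  by (simp add: self_adjoint_def blinfun.add_left inner_add_left inner_add_right)

lemma self_adjoint_diff: "self_adjoint A \<Longrightarrow> self_adjoint B \<Longrightarrow> self_adjoint (A - B)"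
  by (simp add: self_adjoint_def blinfun.diff_left inner_diff_left inner_diff_right)

lemma self_adjoint_scaleR: "self_adjoint A \<Longrightarrow> self_adjoint (c *\<^sub>R A)"
  by (simp add: self_adjoint_def blinfun.scaleR_left)

lemma self_adjoint_sum: "(\<And>i. i \<in> I \<Longrightarrow> self_adjoint (f i)) \<Longrightarrow> self_adjoint (sum f I)"
  by (induct I rule: infinite_finite_induct) (simp_all add: self_adjoint_zero self_adjoint_add)

lemma self_adjoint_sandwich: "self_adjoint B \<Longrightarrow> self_adjoint P \<Longrightarrow> self_adjoint (B o\<^sub>L P o\<^sub>L B)"
  by (simp add: self_adjoint_def)

lemma self_adjoint_compose_commute:
  "self_adjoint A \<Longrightarrow> self_adjoint B \<Longrightarrow> A o\<^sub>L B = B o\<^sub>L A \<Longrightarrow> self_adjoint (A o\<^sub>L B)"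
  unfolding self_adjoint_def by (metis blinfun_apply_blinfun_compose)

lemma pos_op_id: "pos_op (id_blinfun :: 'a::real_inner \<Rightarrow>\<^sub>L 'a)"
  by (simp add: pos_op_def self_adjoint_id)

lemma pos_op_add: "pos_op A \<Longrightarrow> pos_op B \<Longrightarrow> pos_op (A + B)"
  by (simp add: pos_op_def self_adjoint_add blinfun.add_left inner_add_left)

lemma pos_op_scaleR: "pos_op A \<Longrightarrow> 0 \<le> c \<Longrightarrow> pos_op (c *\<^sub>R A)"
  by (simp add: pos_op_def self_adjoint_scaleR blinfun.scaleR_left)

lemma pos_op_sandwich:
  assumes "self_adjoint B" and "pos_op P"
  shows "pos_op (B o\<^sub>L P o\<^sub>L B)"
proof -
  have "inner ((B o\<^sub>L P o\<^sub>L B) x) x = inner (P (B x)) (B x)" for x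
    using self_adjointD[OF assms(1)] by simp
  then show ?thesis
    using assms by (simp add: pos_op_def self_adjoint_sandwich pos_op_inner_nonneg)
qed

lemma pos_op_square: "self_adjoint X \<Longrightarrow> pos_op (X o\<^sub>L X)"
  unfolding pos_op_def
  by (simp add: self_adjoint_compose_commute self_adjointD[of X "X _"])

lemma pos_op_cauchy_schwarz:
  assumes P: "pos_op P"
  shows "(inner (P x) y)\<^sup>2 \<le> inner (P x) x * inner (P y) y"
proof -
  define a b c where "a = inner (P y) y" and "b = inner (P x) y" and "c = inner (P x) x"
  have sym: "inner (P y) x = b"
    using self_adjointD[OF pos_op_self_adjoint[OF P], of y x] by (simp add: b_def inner_commute)
  have quadratic: "0 \<le> c + 2 * t * b + t\<^sup>2 * a" for t
  proof -
    have "0 \<le> inner (P (x + t *\<^sub>R y)) (x + t *\<^sub>R y)" by (rule pos_op_inner_nonneg[OF P])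
    also have "\<dots> = c + 2 * t * b + t\<^sup>2 * a"
      by (simp add: blinfun.add_right blinfun.scaleR_right inner_add_left inner_add_right sym
          a_def b_def c_def power2_eq_square algebra_simps)
    finally show ?thesis .
  qed
  have "a \<ge> 0" unfolding a_def by (rule pos_op_inner_nonneg[OF P])
  show ?thesis
  proof (cases "a = 0")
    case True
    have "b = 0"
    proof (rule ccontr)
      assume "b \<noteq> 0"
      with quadratic[of "- (c + 1) / (2 * b)"] True show False by (simp add: field_simps)
    qed
    then show ?thesis using True by (simp add: b_def a_def c_def)
  next
    case False
    with \<open>a \<ge> 0\<close> have "a > 0" by simp
    from quadratic[of "- b / a"] \<open>a > 0\<close> have "0 \<le> c - b\<^sup>2 / a"
      by (simp add: field_simps power2_eq_square)
    then show ?thesis using \<open>a > 0\<close> by (simp add: a_def b_def c_def field_simps)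
  qed
qed

lemma pos_op_norm_apply_sq_le:
  assumes P: "pos_op P" and "0 \<le> c" and bound: "\<And>z. inner (P z) z \<le> c * (norm z)\<^sup>2"
  shows "(norm (P x))\<^sup>2 \<le> c * inner (P x) x"
proof -
  have "(inner (P x) (P x))\<^sup>2 \<le> inner (P x) x * inner (P (P x)) (P x)"
    by (rule pos_op_cauchy_schwarz[OF P])
  also have "\<dots> \<le> inner (P x) x * (c * (norm (P x))\<^sup>2)"
    by (rule mult_left_mono[OF bound pos_op_inner_nonneg[OF P]])
  finally have squares: "(norm (P x))\<^sup>2 * (norm (P x))\<^sup>2 \<le> (c * inner (P x) x) * (norm (P x))\<^sup>2"
    by (simp add: power2_norm_eq_inner[symmetric] power2_eq_square algebra_simps)
  show ?thesis
  proof (cases "P x = 0")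
    case True
    then show ?thesis using \<open>0 \<le> c\<close> by simp
  next
    case False
    then have "0 < (norm (P x))\<^sup>2" by simp
    then show ?thesis using mult_right_le_imp_le[OF squares] by blast
  qed
qed

lemma pos_op_apply_eq_zero:
  assumes "pos_op P" and "inner (P x) x = 0"
  shows "P x = 0"
  using pos_op_norm_apply_sq_le[OF assms(1) norm_ge_zero inner_apply_le_norm, of x] assms(2) by simp

lemma pos_op_norm_le:
  assumes B: "pos_op B" and "0 \<le> c" and bound: "\<And>x. inner (B x) x \<le> c * (norm x)\<^sup>2"
  shows "norm B \<le> c"
proof (rule norm_blinfun_bound[OF \<open>0 \<le> c\<close>])
  fix x
  have "(norm (B x))\<^sup>2 \<le> c * inner (B x) x" by (rule pos_op_norm_apply_sq_le[OF B \<open>0 \<le> c\<close> bound])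
  also have "\<dots> \<le> c * (c * (norm x)\<^sup>2)" by (rule mult_left_mono[OF bound \<open>0 \<le> c\<close>])
  also have "\<dots> = (c * norm x)\<^sup>2" by (simp add: power2_eq_square)
  finally show "norm (B x) \<le> c * norm x"
    by (rule power2_le_imp_le) (simp add: \<open>0 \<le> c\<close>)
qed

lemma op_le_convex_combination:
  fixes P :: "nat \<Rightarrow> 'a::real_inner \<Rightarrow>\<^sub>L 'a"
  assumes "\<And>i. i \<in> I \<Longrightarrow> 0 \<le> w i" and "sum w I = 1"
    and "\<And>i. i \<in> I \<Longrightarrow> pos_op (P i) \<and> op_le (P i) (\<gamma> *\<^sub>R id_blinfun)"
  shows "pos_op (\<Sum>i\<in>I. w i *\<^sub>R P i) \<and> op_le (\<Sum>i\<in>I. w i *\<^sub>R P i) (\<gamma> *\<^sub>R id_blinfun)"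
proof -
  have self_adjoint: "self_adjoint (\<Sum>i\<in>I. w i *\<^sub>R P i)"
    using assms(3) by (intro self_adjoint_sum self_adjoint_scaleR pos_op_self_adjoint) blast
  have quadratic_form: "inner ((\<Sum>i\<in>I. w i *\<^sub>R P i) x) x = (\<Sum>i\<in>I. w i * inner (P i x) x)" for x
    by (simp add: blinfun.sum_left blinfun.scaleR_left inner_sum_left)
  have "0 \<le> inner ((\<Sum>i\<in>I. w i *\<^sub>R P i) x) x" for x
    unfolding quadratic_form using assms by (intro sum_nonneg mult_nonneg_nonneg pos_op_inner_nonneg) auto
  moreover have "inner ((\<Sum>i\<in>I. w i *\<^sub>R P i) x) x \<le> \<gamma> * (norm x)\<^sup>2" for x
  proof -
    have "(\<Sum>i\<in>I. w i * inner (P i x) x) \<le> (\<Sum>i\<in>I. w i * (\<gamma> * (norm x)\<^sup>2))"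
      using assms by (intro sum_mono mult_left_mono op_le_scaled_id_inner) auto
    then show ?thesis by (simp add: quadratic_form sum_distrib_right[symmetric] assms(2))
  qed
  ultimately show ?thesis using self_adjoint by (simp add: pos_op_def op_le_scaled_id_iff)
qed

section \<open>Absolutely convergent series of operators\<close>

text \<open>The library proves these facts for the class \<^class>\<open>banach\<close>, but the sort
  \<open>{real_normed_vector, complete_space}\<close> of the theorem is not known to be contained in it.\<close>

lemma summable_norm_cancel_complete:
  fixes f :: "nat \<Rightarrow> 'a::{real_normed_vector,complete_space}"
  assumes norm_summable: "summable (\<lambda>n. norm (f n))"
  shows "summable f"
proof (rule summable_bounded_partials)
  let ?tail = "\<lambda>a. (\<Sum>n. norm (f n)) - (\<Sum>n\<le>a. norm (f n))"
  show "?tail \<longlonglongrightarrow> 0"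
    using tendsto_diff[OF tendsto_const[of "\<Sum>n. norm (f n)"] summable_LIMSEQ'[OF norm_summable]]
    by simp
  have "norm (sum f {a<..b}) \<le> ?tail a" if "a < b" for a b
  proof -
    have split: "{..b} = {..a} \<union> {a<..b}" using that by auto
    have "norm (sum f {a<..b}) \<le> (\<Sum>n\<in>{a<..b}. norm (f n))" by (rule norm_sum)
    also have "\<dots> = (\<Sum>n\<le>b. norm (f n)) - (\<Sum>n\<le>a. norm (f n))"
      unfolding split by (subst sum.union_disjoint) auto
    also have "\<dots> \<le> ?tail a"
      using sum_le_suminf[OF norm_summable, of "{..b}"] by simp
    finally show ?thesis .
  qed
  then show "eventually (\<lambda>x0. \<forall>a\<ge>x0. \<forall>b>a. norm (sum f {a<..b}) \<le> ?tail a) sequentially"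
    by (intro always_eventually) blast
qed

lemma norm_suminf_le_complete:
  fixes f :: "nat \<Rightarrow> 'a::{real_normed_vector,complete_space}"
  assumes norm_summable: "summable (\<lambda>n. norm (f n))"
  shows "norm (suminf f) \<le> (\<Sum>n. norm (f n))"
proof (rule LIMSEQ_le)
  show "(\<lambda>n. norm (\<Sum>i<n. f i)) \<longlonglongrightarrow> norm (suminf f)"
    by (rule tendsto_norm[OF summable_LIMSEQ[OF summable_norm_cancel_complete[OF norm_summable]]])
  show "(\<lambda>n. \<Sum>i<n. norm (f i)) \<longlonglongrightarrow> (\<Sum>n. norm (f n))"
    by (rule summable_LIMSEQ[OF norm_summable])
qed (intro exI allI impI norm_sum)

lemma norm_suminf_blinfun_apply_le:
  fixes a :: "nat \<Rightarrow> 'a::real_normed_vector \<Rightarrow>\<^sub>L 'b::{real_normed_vector,complete_space}"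
  assumes norm_summable: "summable (\<lambda>n. norm (a n))"
  shows "summable (\<lambda>n. a n x)" "norm (\<Sum>n. a n x) \<le> (\<Sum>n. norm (a n)) * norm x"
proof -
  have norm_apply_summable: "summable (\<lambda>n. norm (a n x))"
    by (rule summable_comparison_test'[OF summable_mult2[OF norm_summable, of "norm x"]])
      (simp add: norm_blinfun)
  then show "summable (\<lambda>n. a n x)" by (rule summable_norm_cancel_complete)
  have "norm (\<Sum>n. a n x) \<le> (\<Sum>n. norm (a n x))"
    by (rule norm_suminf_le_complete[OF norm_apply_summable])
  also have "\<dots> \<le> (\<Sum>n. norm (a n) * norm x)"
    by (rule suminf_le[OF norm_blinfun norm_apply_summable summable_mult2[OF norm_summable]])
  finally show "norm (\<Sum>n. a n x) \<le> (\<Sum>n. norm (a n)) * norm x"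
    by (simp add: suminf_mult2[OF norm_summable])
qed

lemma summable_blinfun_norm_cancel:
  fixes a :: "nat \<Rightarrow> 'a::real_normed_vector \<Rightarrow>\<^sub>L 'b::{real_normed_vector,complete_space}"
  assumes norm_summable: "summable (\<lambda>n. norm (a n))"
  shows "summable a"
proof -
  note apply_summable = norm_suminf_blinfun_apply_le(1)[OF norm_summable]
  define v where "v x = (\<Sum>n. a n x)" for x
  have "bounded_linear v"
  proof (rule bounded_linear_intro[where K = "\<Sum>n. norm (a n)"])
    show "v (x + y) = v x + v y" for x y
      unfolding v_def by (simp add: blinfun.add_right suminf_add[OF apply_summable apply_summable])
    show "v (r *\<^sub>R x) = r *\<^sub>R v x" for r x
      unfolding v_def by (simp add: blinfun.scaleR_right suminf_scaleR_right[OF apply_summable])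
    show "norm (v x) \<le> norm x * (\<Sum>n. norm (a n))" for x
      unfolding v_def using norm_suminf_blinfun_apply_le(2)[OF norm_summable, of x]
      by (simp add: mult.commute)
  qed
  then have apply_v: "blinfun_apply (Blinfun v) = v" by (rule bounded_linear_Blinfun_apply)
  have tail_summable: "summable (\<lambda>k. norm (a (k + n)))" for n
    using norm_summable by (rule summable_ignore_initial_segment)
  have "(\<lambda>n. (\<Sum>k<n. a k) - Blinfun v) \<longlonglongrightarrow> 0"
  proof (rule Lim_null_comparison)
    show "\<forall>\<^sub>F n in sequentially. norm ((\<Sum>k<n. a k) - Blinfun v) \<le> (\<Sum>k. norm (a (k + n)))"
    proof (intro always_eventually allI norm_blinfun_bound)
      fix n x
      have "((\<Sum>k<n. a k) - Blinfun v) x = - (\<Sum>k. a (k + n) x)"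
        using suminf_split_initial_segment[OF apply_summable, of x n]
        by (simp add: apply_v v_def blinfun.diff_left blinfun.sum_left)
      then show "norm (((\<Sum>k<n. a k) - Blinfun v) x) \<le> (\<Sum>k. norm (a (k + n))) * norm x"
        using norm_suminf_blinfun_apply_le(2)[OF tail_summable, of n x] by simp
    qed (simp add: suminf_nonneg tail_summable)
    show "(\<lambda>n. \<Sum>k. norm (a (k + n))) \<longlonglongrightarrow> 0"
      using tendsto_diff[OF tendsto_const[of "\<Sum>n. norm (a n)"] summable_LIMSEQ[OF norm_summable]]
      by (simp add: suminf_minus_initial_segment[OF norm_summable])
  qed
  then have "(\<lambda>n. \<Sum>k<n. a k) \<longlonglongrightarrow> Blinfun v" by (rule LIM_zero_cancel)
  then show ?thesis unfolding summable_def sums_def by (rule exI)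
qed

lemma (in bounded_bilinear) Cauchy_product_sums:
  assumes "summable a" "summable b"
    and norm_a: "summable (\<lambda>k. norm (a k))" and norm_b: "summable (\<lambda>k. norm (b k))"
  shows "(\<lambda>k. \<Sum>i\<le>k. prod (a i) (b (k - i))) sums (prod (suminf a) (suminf b))"
proof -
  obtain K where K: "0 \<le> K" "\<And>x y. norm (prod x y) \<le> norm x * norm y * K"
    using nonneg_bounded by blast
  let ?square = "\<lambda>n::nat. {..<n} \<times> {..<n}"
  let ?triangle = "\<lambda>n::nat. {(i, j). i + j < n}"
  let ?f = "\<lambda>(i, j). prod (a i) (b j)"
  let ?g = "\<lambda>(i, j). norm (a i) * norm (b j)"
  have triangle_sub: "?triangle n \<subseteq> ?square n" for n by auto
  have square_lim: "(\<lambda>n. sum ?f (?square n)) \<longlonglongrightarrow> prod (suminf a) (suminf b)"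
  proof -
    have "prod (\<Sum>k<n. a k) (\<Sum>k<n. b k) = sum ?f (?square n)" for n
      unfolding sum_left by (simp add: sum_right sum.cartesian_product)
    moreover have "(\<lambda>n. prod (\<Sum>k<n. a k) (\<Sum>k<n. b k)) \<longlonglongrightarrow> prod (suminf a) (suminf b)"
      using assms(1,2) by (intro tendsto summable_LIMSEQ)
    ultimately show ?thesis by simp
  qed
  have gap_norm_lim: "(\<lambda>n. sum ?g (?square n) - sum ?g (?triangle n)) \<longlonglongrightarrow> 0"
  proof -
    have "(\<lambda>n. sum ?g (?square n)) \<longlonglongrightarrow> (\<Sum>k. norm (a k)) * (\<Sum>k. norm (b k))"
      using tendsto_mult[OF summable_LIMSEQ[OF norm_a] summable_LIMSEQ[OF norm_b]]
      by (simp add: sum_product sum.cartesian_product)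
    moreover have "(\<lambda>n. sum ?g (?triangle n)) \<longlonglongrightarrow> (\<Sum>k. norm (a k)) * (\<Sum>k. norm (b k))"
      using Cauchy_product_sums[of "\<lambda>k. norm (a k)" "\<lambda>k. norm (b k)"] norm_a norm_b
      by (simp add: sums_def sum.triangle_reindex)
    ultimately show ?thesis using tendsto_diff by fastforce
  qed
  have "norm (sum ?f (?square n) - sum ?f (?triangle n))
      \<le> K * (sum ?g (?square n) - sum ?g (?triangle n))" for n
  proof -
    have "norm (sum ?f (?square n) - sum ?f (?triangle n)) = norm (sum ?f (?square n - ?triangle n))"
      by (simp add: sum_diff triangle_sub)
    also have "\<dots> \<le> (\<Sum>p\<in>?square n - ?triangle n. K * ?g p)"
      using K(2) by (intro sum_norm_le) (auto simp: mult.commute mult.left_commute)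
    also have "\<dots> = K * (sum ?g (?square n) - sum ?g (?triangle n))"
      by (simp add: sum_distrib_left[symmetric] sum_diff triangle_sub)
    finally show ?thesis .
  qed
  then have "(\<lambda>n. sum ?f (?square n) - sum ?f (?triangle n)) \<longlonglongrightarrow> 0"
    by (intro Lim_null_comparison[OF always_eventually tendsto_mult_right_zero[OF gap_norm_lim]]) blast
  from tendsto_diff[OF square_lim this] have "(\<lambda>n. sum ?f (?triangle n)) \<longlonglongrightarrow> prod (suminf a) (suminf b)"
    by simp
  then show ?thesis by (simp add: sums_def sum.triangle_reindex)
qed

section \<open>Square roots\<close>

primrec blinfun_pow :: "('a::real_normed_vector \<Rightarrow>\<^sub>L 'a) \<Rightarrow> nat \<Rightarrow> ('a \<Rightarrow>\<^sub>L 'a)" where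
  "blinfun_pow B 0 = id_blinfun"
| "blinfun_pow B (Suc n) = B o\<^sub>L blinfun_pow B n"

lemma blinfun_pow_add: "blinfun_pow B (m + n) = blinfun_pow B m o\<^sub>L blinfun_pow B n"
  by (induct m) (simp_all add: blinfun_compose_assoc)

lemma blinfun_pow_commute: "T o\<^sub>L B = B o\<^sub>L T \<Longrightarrow> T o\<^sub>L blinfun_pow B n = blinfun_pow B n o\<^sub>L T"
  by (induct n) (simp_all add: blinfun_compose_assoc[symmetric], metis blinfun_compose_assoc)

lemma norm_blinfun_pow_le: "norm (blinfun_pow B n) \<le> norm B ^ n"
proof (induct n)
  case 0
  then show ?case by (simp add: norm_blinfun_id_le)
next
  case (Suc n)
  have "norm (B o\<^sub>L blinfun_pow B n) \<le> norm B * norm (blinfun_pow B n)"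
    by (rule norm_blinfun_compose)
  also have "\<dots> \<le> norm B * norm B ^ n" by (rule mult_left_mono[OF Suc norm_ge_zero])
  finally show ?case by simp
qed

lemma self_adjoint_blinfun_pow: "self_adjoint B \<Longrightarrow> self_adjoint (blinfun_pow B n)"
proof (induct n)
  case 0
  then show ?case by (simp add: self_adjoint_id)
next
  case (Suc n)
  have "B o\<^sub>L blinfun_pow B n = blinfun_pow B n o\<^sub>L B" by (rule blinfun_pow_commute) simp
  then show ?case using Suc by (simp add: self_adjoint_compose_commute)
qed

definition sqrt_one_minus_coeff :: "nat \<Rightarrow> real" where
  "sqrt_one_minus_coeff n = (-1) ^ n * ((1/2) gchoose n)"

lemma sqrt_one_minus_coeff_0 [simp]: "sqrt_one_minus_coeff 0 = 1"
  by (simp add: sqrt_one_minus_coeff_def)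

lemma sqrt_one_minus_coeff_Suc:
  "sqrt_one_minus_coeff (Suc n) = sqrt_one_minus_coeff n * ((real n - 1/2) / (real n + 1))"
proof -
  have "(1/2::real) * ((1/2) gchoose n) = real n * ((1/2) gchoose n) + real (Suc n) * ((1/2) gchoose (Suc n))"
    by (rule gbinomial_mult_1)
  then have "((1/2::real) gchoose (Suc n)) = (1/2 - real n) * ((1/2) gchoose n) / (real n + 1)"
    by (simp add: field_simps)
  then have "sqrt_one_minus_coeff (Suc n)
      = (-1) ^ Suc n * ((1/2 - real n) * ((1/2) gchoose n) / (real n + 1))"
    by (simp add: sqrt_one_minus_coeff_def)
  also have "\<dots> = ((-1) ^ n * ((1/2::real) gchoose n)) * ((real n - 1/2) / (real n + 1))"
    by (simp add: field_simps)
  finally show ?thesis by (simp add: sqrt_one_minus_coeff_def)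
qed

lemma sqrt_one_minus_coeff_nonpos: "n \<ge> 1 \<Longrightarrow> sqrt_one_minus_coeff n \<le> 0"
proof (induct n)
  case (Suc n)
  show ?case
  proof (cases "n = 0")
    case False
    then have "sqrt_one_minus_coeff n \<le> 0" and "0 \<le> (real n - 1/2) / (real n + 1)"
      using Suc by simp_all
    then show ?thesis unfolding sqrt_one_minus_coeff_Suc by (rule mult_nonpos_nonneg)
  qed (simp add: sqrt_one_minus_coeff_Suc)
qed simp

lemma sqrt_one_minus_coeff_partial_sum:
  "(\<Sum>j\<le>n. sqrt_one_minus_coeff j) = -2 * (real n + 1) * sqrt_one_minus_coeff (Suc n)"
proof (induct n)
  case (Suc n)
  show ?case by (simp add: Suc sqrt_one_minus_coeff_Suc[of "Suc n"] field_simps)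
qed (simp add: sqrt_one_minus_coeff_Suc)

lemma sqrt_one_minus_coeff_partial_sum_nonneg: "0 \<le> (\<Sum>j\<le>n. sqrt_one_minus_coeff j)"
  unfolding sqrt_one_minus_coeff_partial_sum
  using sqrt_one_minus_coeff_nonpos[of "Suc n"] by (simp add: mult_nonpos_nonpos)

lemma summable_abs_sqrt_one_minus_coeff: "summable (\<lambda>n. \<bar>sqrt_one_minus_coeff n\<bar>)"
proof (rule summableI_nonneg_bounded[where x = 2])
  fix n
  have abs_eq: "\<bar>sqrt_one_minus_coeff j\<bar> = (if j = 0 then 2 else 0) - sqrt_one_minus_coeff j" for j
    using sqrt_one_minus_coeff_nonpos[of j] by (cases "j = 0") auto
  show "(\<Sum>j<n. \<bar>sqrt_one_minus_coeff j\<bar>) \<le> 2"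
  proof (cases n)
    case (Suc m)
    have "(\<Sum>j<n. \<bar>sqrt_one_minus_coeff j\<bar>) = 2 - (\<Sum>j\<le>m. sqrt_one_minus_coeff j)"
      unfolding Suc lessThan_Suc_atMost abs_eq by (simp add: sum_subtractf)
    then show ?thesis using sqrt_one_minus_coeff_partial_sum_nonneg[of m] by simp
  qed simp
qed simp

lemma suminf_sqrt_one_minus_coeff_nonneg: "0 \<le> suminf sqrt_one_minus_coeff"
proof (rule LIMSEQ_le_const)
  show "(\<lambda>n. \<Sum>j<n. sqrt_one_minus_coeff j) \<longlonglongrightarrow> suminf sqrt_one_minus_coeff"
    using summable_abs_sqrt_one_minus_coeff summable_rabs_cancel summable_LIMSEQ by blast
  show "\<exists>N. \<forall>n\<ge>N. 0 \<le> (\<Sum>j<n. sqrt_one_minus_coeff j)"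
  proof (intro exI allI impI)
    fix n :: nat
    show "0 \<le> (\<Sum>j<n. sqrt_one_minus_coeff j)"
      by (cases n) (simp_all add: lessThan_Suc_atMost sqrt_one_minus_coeff_partial_sum_nonneg)
  qed
qed

lemma sqrt_one_minus_coeff_convolution:
  "(\<Sum>i\<le>k. sqrt_one_minus_coeff i * sqrt_one_minus_coeff (k - i)) = (if k = 0 then 1 else if k = 1 then -1 else 0)"
proof -
  have "(\<Sum>i\<le>k. sqrt_one_minus_coeff i * sqrt_one_minus_coeff (k - i))
      = (-1) ^ k * (\<Sum>i=0..k. ((1/2::real) gchoose i) * ((1/2) gchoose (k - i)))"
    unfolding sum_distrib_left atMost_atLeast0[symmetric]
  proof (rule sum.cong)
    fix i assume "i \<in> {..k}"
    then have "(-1::real) ^ k = (-1) ^ i * (-1) ^ (k - i)" by (simp add: power_add[symmetric])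
    then show "sqrt_one_minus_coeff i * sqrt_one_minus_coeff (k - i)
        = (-1) ^ k * (((1/2::real) gchoose i) * ((1/2) gchoose (k - i)))"
      unfolding sqrt_one_minus_coeff_def by (simp only: mult_ac)
  qed simp
  also have "\<dots> = (-1) ^ k * ((1::real) gchoose k)"
    using gbinomial_Vandermonde[of "1/2::real" "1/2" k] by simp
  also have "\<dots> = (if k = 0 then 1 else if k = 1 then -1 else 0)"
    using binomial_gbinomial[of 1 k, where 'a = real] by (cases k) (auto simp: binomial_eq_0)
  finally show ?thesis .
qed

definition sqrt_id_minus :: "('a::real_normed_vector \<Rightarrow>\<^sub>L 'a) \<Rightarrow> ('a \<Rightarrow>\<^sub>L 'a)" where
  "sqrt_id_minus B = (\<Sum>n. sqrt_one_minus_coeff n *\<^sub>R blinfun_pow B n)"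

lemma sqrt_id_minus_sums:
  fixes B :: "'a::{real_normed_vector,complete_space} \<Rightarrow>\<^sub>L 'a"
  assumes "norm B \<le> 1"
  shows "summable (\<lambda>n. norm (sqrt_one_minus_coeff n *\<^sub>R blinfun_pow B n))"
    and "(\<lambda>n. sqrt_one_minus_coeff n *\<^sub>R blinfun_pow B n) sums sqrt_id_minus B"
proof -
  have pow_le: "norm (blinfun_pow B n) \<le> 1" for n
    using norm_blinfun_pow_le[of B n] power_le_one[OF norm_ge_zero assms, of n] by linarith
  have "norm (sqrt_one_minus_coeff n *\<^sub>R blinfun_pow B n) \<le> \<bar>sqrt_one_minus_coeff n\<bar>" for n
    using mult_left_le[OF pow_le abs_ge_zero] by simp
  then show norm_summable: "summable (\<lambda>n. norm (sqrt_one_minus_coeff n *\<^sub>R blinfun_pow B n))"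
    by (intro summable_comparison_test'[OF summable_abs_sqrt_one_minus_coeff]) simp
  show "(\<lambda>n. sqrt_one_minus_coeff n *\<^sub>R blinfun_pow B n) sums sqrt_id_minus B"
    unfolding sqrt_id_minus_def
    by (rule summable_sums[OF summable_blinfun_norm_cancel[OF norm_summable]])
qed

lemma sums_inner_apply:
  fixes S :: "'a::real_inner \<Rightarrow>\<^sub>L 'a"
  assumes "a sums S"
  shows "(\<lambda>n. inner (a n x) y) sums inner (S x) y"
  by (rule bounded_linear.sums[OF bounded_linear_compose[OF bounded_linear_inner_left
        blinfun.bounded_linear_left] assms])

lemma self_adjoint_sqrt_id_minus:
  fixes B :: "'a::{real_inner,complete_space} \<Rightarrow>\<^sub>L 'a"
  assumes "self_adjoint B" and "norm B \<le> 1"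
  shows "self_adjoint (sqrt_id_minus B)"
  unfolding self_adjoint_def
proof (intro allI)
  fix x y
  note sums = sqrt_id_minus_sums(2)[OF assms(2)]
  have terms_eq: "(\<lambda>n. inner ((sqrt_one_minus_coeff n *\<^sub>R blinfun_pow B n) y) x)
      = (\<lambda>n. inner ((sqrt_one_minus_coeff n *\<^sub>R blinfun_pow B n) x) y)"
    using self_adjointD[OF self_adjoint_blinfun_pow[OF assms(1)], of _ x y]
    by (simp add: blinfun.scaleR_left inner_commute)
  have "(\<lambda>n. inner ((sqrt_one_minus_coeff n *\<^sub>R blinfun_pow B n) x) y) sums inner (sqrt_id_minus B y) x"
    using sums_inner_apply[OF sums, of y x] unfolding terms_eq .
  then have "inner (sqrt_id_minus B x) y = inner (sqrt_id_minus B y) x"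
    by (rule sums_unique2[OF sums_inner_apply[OF sums]])
  then show "inner (sqrt_id_minus B x) y = inner x (sqrt_id_minus B y)"
    by (simp add: inner_commute)
qed

lemma pos_op_sqrt_id_minus:
  fixes B :: "'a::{real_inner,complete_space} \<Rightarrow>\<^sub>L 'a"
  assumes "self_adjoint B" and "norm B \<le> 1"
  shows "pos_op (sqrt_id_minus B)"
proof -
  have "(suminf sqrt_one_minus_coeff) * (norm x)\<^sup>2 \<le> inner (sqrt_id_minus B x) x" for x
  proof (rule sums_le)
    show "(\<lambda>n. sqrt_one_minus_coeff n * (norm x)\<^sup>2) sums (suminf sqrt_one_minus_coeff * (norm x)\<^sup>2)"
      by (rule sums_mult2[OF summable_sums[OF summable_rabs_cancel[OF
            summable_abs_sqrt_one_minus_coeff]]])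
    show "(\<lambda>n. inner ((sqrt_one_minus_coeff n *\<^sub>R blinfun_pow B n) x) x) sums inner (sqrt_id_minus B x) x"
      by (rule sums_inner_apply[OF sqrt_id_minus_sums(2)[OF assms(2)]])
    fix n
    show "sqrt_one_minus_coeff n * (norm x)\<^sup>2 \<le> inner ((sqrt_one_minus_coeff n *\<^sub>R blinfun_pow B n) x) x"
    proof (cases "n = 0")
      case False
      have "inner (blinfun_pow B n x) x \<le> norm (blinfun_pow B n) * (norm x)\<^sup>2"
        by (rule inner_apply_le_norm)
      also have "\<dots> \<le> (norm x)\<^sup>2"
        using norm_blinfun_pow_le[of B n] power_le_one[OF norm_ge_zero assms(2), of n]
        by (intro mult_left_le_one_le) auto
      finally show ?thesis
        using sqrt_one_minus_coeff_nonpos[of n] False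
        by (simp add: blinfun.scaleR_left mult_left_mono_neg)
    qed (simp add: power2_norm_eq_inner)
  qed
  moreover have "0 \<le> (suminf sqrt_one_minus_coeff) * (norm x)\<^sup>2" for x
    using suminf_sqrt_one_minus_coeff_nonneg by simp
  ultimately have "0 \<le> inner (sqrt_id_minus B x) x" for x
    using order_trans by blast
  then show ?thesis
    by (simp add: pos_op_def self_adjoint_sqrt_id_minus[OF assms])
qed

lemma sqrt_id_minus_square:
  fixes B :: "'a::{real_inner,complete_space} \<Rightarrow>\<^sub>L 'a"
  assumes "norm B \<le> 1"
  shows "sqrt_id_minus B o\<^sub>L sqrt_id_minus B = id_blinfun - B"
proof -
  define a where "a n = sqrt_one_minus_coeff n *\<^sub>R blinfun_pow B n" for n
  note sums = sqrt_id_minus_sums[OF assms, folded a_def]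
  have "(\<lambda>k. \<Sum>i\<le>k. a i o\<^sub>L a (k - i)) sums (sqrt_id_minus B o\<^sub>L sqrt_id_minus B)"
    using bounded_bilinear.Cauchy_product_sums[OF bounded_bilinear_blinfun_compose
        sums_summable[OF sums(2)] sums_summable[OF sums(2)] sums(1) sums(1)]
    by (simp add: sums_unique[OF sums(2), symmetric])
  moreover have "(\<Sum>i\<le>k. a i o\<^sub>L a (k - i))
      = (if k = 0 then 1 else if k = 1 then -1 else 0) *\<^sub>R blinfun_pow B k" for k
  proof -
    have "(\<Sum>i\<le>k. a i o\<^sub>L a (k - i))
        = (\<Sum>i\<le>k. sqrt_one_minus_coeff i * sqrt_one_minus_coeff (k - i)) *\<^sub>R blinfun_pow B k"
      unfolding scaleR_sum_left
    proof (rule sum.cong[OF refl])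
      fix i assume "i \<in> {..k}"
      then have "blinfun_pow B i o\<^sub>L blinfun_pow B (k - i) = blinfun_pow B k"
        using blinfun_pow_add[of B i "k - i"] by simp
      then show "a i o\<^sub>L a (k - i)
          = (sqrt_one_minus_coeff i * sqrt_one_minus_coeff (k - i)) *\<^sub>R blinfun_pow B k"
        by (simp add: a_def blinfun_compose_simps)
    qed
    then show ?thesis by (simp only: sqrt_one_minus_coeff_convolution)
  qed
  moreover have "(\<lambda>k. (if k = 0 then 1 else if k = 1 then -1 else 0) *\<^sub>R blinfun_pow B k)
      sums (id_blinfun - B)"
    using sums_finite[of "{0, 1}" "\<lambda>k. (if k = 0 then 1 else if k = 1 then -1 else 0) *\<^sub>R blinfun_pow B k"]
    by simp
  ultimately show ?thesis using sums_unique2 by force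
qed

lemma sqrt_id_minus_commute:
  fixes B :: "'a::{real_inner,complete_space} \<Rightarrow>\<^sub>L 'a"
  assumes "norm B \<le> 1" and "T o\<^sub>L B = B o\<^sub>L T"
  shows "T o\<^sub>L sqrt_id_minus B = sqrt_id_minus B o\<^sub>L T"
proof -
  note sums = sqrt_id_minus_sums(2)[OF assms(1)]
  have "(\<lambda>n. T o\<^sub>L (sqrt_one_minus_coeff n *\<^sub>R blinfun_pow B n)) sums (T o\<^sub>L sqrt_id_minus B)"
    by (rule bounded_linear.sums[OF bounded_bilinear.bounded_linear_right[OF
          bounded_bilinear_blinfun_compose] sums])
  moreover have "(\<lambda>n. (sqrt_one_minus_coeff n *\<^sub>R blinfun_pow B n) o\<^sub>L T) sums (sqrt_id_minus B o\<^sub>L T)"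
    by (rule bounded_linear.sums[OF bounded_bilinear.bounded_linear_left[OF
          bounded_bilinear_blinfun_compose] sums])
  ultimately show ?thesis
    using blinfun_pow_commute[OF assms(2)] by (simp add: blinfun_compose_simps sums_unique2)
qed

lemma pos_op_id_minus_scaled:
  fixes A :: "'a::real_inner \<Rightarrow>\<^sub>L 'a"
  assumes "self_adjoint A" and "norm A \<le> a" and "0 < a"
  shows "pos_op (id_blinfun - (1 / a) *\<^sub>R A)"
proof -
  have "inner (A x) x / a \<le> (norm x)\<^sup>2" for x
  proof -
    have "inner (A x) x \<le> a * (norm x)\<^sup>2"
      using inner_apply_le_norm[of A x] mult_right_mono[OF assms(2) zero_le_power2[of "norm x"]]
      by linarith
    then show ?thesis using \<open>0 < a\<close> by (simp add: divide_le_eq mult.commute)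
  qed
  then show ?thesis
    using assms(1)
    by (simp add: pos_op_def self_adjoint_diff self_adjoint_id self_adjoint_scaleR blinfun.diff_left
        blinfun.scaleR_left inner_diff_left power2_norm_eq_inner)
qed

lemma pos_op_sqrt_exists:
  fixes A :: "'a::{real_inner,complete_space} \<Rightarrow>\<^sub>L 'a"
  assumes A: "pos_op A"
  shows "\<exists>S. pos_op S \<and> S o\<^sub>L S = A \<and> (\<forall>T. T o\<^sub>L A = A o\<^sub>L T \<longrightarrow> T o\<^sub>L S = S o\<^sub>L T)"
proof -
  define a where "a = norm A + 1"
  have "a > 0" unfolding a_def by (simp add: add_nonneg_pos)
  define B where "B = id_blinfun - (1 / a) *\<^sub>R A"
  have "pos_op B"
    unfolding B_def using \<open>a > 0\<close> by (intro pos_op_id_minus_scaled pos_op_self_adjoint A) (simp_all add: a_def)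
  moreover have "inner (B x) x \<le> 1 * (norm x)\<^sup>2" for x
    using pos_op_inner_nonneg[OF A, of x] \<open>a > 0\<close>
    by (simp add: B_def blinfun.diff_left blinfun.scaleR_left inner_diff_left power2_norm_eq_inner)
  ultimately have "norm B \<le> 1" by (rule pos_op_norm_le[OF _ zero_le_one])
  define S where "S = sqrt a *\<^sub>R sqrt_id_minus B"
  have "pos_op S"
    unfolding S_def using \<open>a > 0\<close>
    by (intro pos_op_scaleR pos_op_sqrt_id_minus pos_op_self_adjoint \<open>pos_op B\<close> \<open>norm B \<le> 1\<close>) simp
  moreover have "S o\<^sub>L S = A"
  proof -
    have "S o\<^sub>L S = (sqrt a * sqrt a) *\<^sub>R (sqrt_id_minus B o\<^sub>L sqrt_id_minus B)"
      by (simp add: S_def blinfun_compose_simps)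
    also have "\<dots> = a *\<^sub>R (id_blinfun - B)"
      using \<open>a > 0\<close> by (simp add: sqrt_id_minus_square[OF \<open>norm B \<le> 1\<close>])
    also have "\<dots> = A"
      using \<open>a > 0\<close> by (simp add: B_def)
    finally show ?thesis .
  qed
  moreover have "T o\<^sub>L S = S o\<^sub>L T" if "T o\<^sub>L A = A o\<^sub>L T" for T
  proof -
    have "T o\<^sub>L B = B o\<^sub>L T" using that by (simp add: B_def blinfun_compose_simps)
    then have "T o\<^sub>L sqrt_id_minus B = sqrt_id_minus B o\<^sub>L T"
      by (rule sqrt_id_minus_commute[OF \<open>norm B \<le> 1\<close>])
    then show ?thesis by (simp add: S_def blinfun_compose_simps)
  qed
  ultimately show ?thesis by blast
qed

lemma pos_op_sqrt_unique_commuting: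
  fixes S T :: "'a::real_inner \<Rightarrow>\<^sub>L 'a"
  assumes S: "pos_op S" and T: "pos_op T"
    and square: "S o\<^sub>L S = T o\<^sub>L T" and commute: "S o\<^sub>L T = T o\<^sub>L S"
  shows "S = T"
proof (rule blinfun_eqI)
  fix x
  define y where "y = S x - T x"
  have "S (S x) = T (T x)" and "T (S x) = S (T x)"
    using square commute by (metis blinfun_apply_blinfun_compose)+
  then have "S y + T y = 0"
    by (simp add: y_def blinfun.diff_right algebra_simps)
  then have "inner (S y) y + inner (T y) y = 0"
    by (metis inner_add_left inner_zero_left)
  then have "S y = 0" and "T y = 0"
    using pos_op_inner_nonneg[OF S, of y] pos_op_inner_nonneg[OF T, of y]
    by (auto intro: pos_op_apply_eq_zero[OF S] pos_op_apply_eq_zero[OF T])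
  then have "inner y y = 0"
    using self_adjointD[OF pos_op_self_adjoint[OF S], of x y]
      self_adjointD[OF pos_op_self_adjoint[OF T], of x y]
    by (simp add: y_def inner_diff_left)
  then show "S x = T x" by (simp add: y_def)
qed

lemma op_sqrt_eqI:
  fixes A :: "'a::{real_inner,complete_space} \<Rightarrow>\<^sub>L 'a"
  assumes "pos_op S" and "S o\<^sub>L S = A"
  shows "op_sqrt A = S"
proof -
  have "pos_op A" using pos_op_square[OF pos_op_self_adjoint[OF assms(1)]] assms(2) by simp
  then obtain R where R: "pos_op R" "R o\<^sub>L R = A"
    and R_commute: "\<And>T. T o\<^sub>L A = A o\<^sub>L T \<Longrightarrow> T o\<^sub>L R = R o\<^sub>L T"
    using pos_op_sqrt_exists by blast
  have root_eq_R: "T = R" if "pos_op T" "T o\<^sub>L T = A" for T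
  proof (rule pos_op_sqrt_unique_commuting[OF that(1) R(1)])
    show "T o\<^sub>L T = R o\<^sub>L R" using that R by simp
    have "T o\<^sub>L A = A o\<^sub>L T" using that(2) blinfun_compose_assoc[of T T T] by simp
    then show "T o\<^sub>L R = R o\<^sub>L T" by (rule R_commute)
  qed
  have "op_sqrt A = R"
    unfolding op_sqrt_def by (rule the_equality) (use R root_eq_R in blast)+
  then show ?thesis using root_eq_R[OF assms] by simp
qed

lemma
  fixes A :: "'a::{real_inner,complete_space} \<Rightarrow>\<^sub>L 'a"
  assumes "pos_op A"
  shows pos_op_op_sqrt: "pos_op (op_sqrt A)"
    and op_sqrt_square: "op_sqrt A o\<^sub>L op_sqrt A = A"
proof -
  obtain S where "pos_op S" "S o\<^sub>L S = A" using pos_op_sqrt_exists[OF assms] by blast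
  moreover from this have "op_sqrt A = S" by (rule op_sqrt_eqI)
  ultimately show "pos_op (op_sqrt A)" "op_sqrt A o\<^sub>L op_sqrt A = A" by simp_all
qed

section \<open>Inverses and operator monotonicity of the square root\<close>

lemma neumann_series:
  fixes B :: "'a::{real_normed_vector,complete_space} \<Rightarrow>\<^sub>L 'a"
  assumes "norm B < 1"
  shows "(id_blinfun - B) o\<^sub>L (\<Sum>n. blinfun_pow B n) = id_blinfun"
    and "(\<Sum>n. blinfun_pow B n) o\<^sub>L (id_blinfun - B) = id_blinfun"
proof -
  have pow_le: "norm (blinfun_pow B n) \<le> norm B ^ n" for n
    by (rule norm_blinfun_pow_le)
  have "summable (\<lambda>n. norm (blinfun_pow B n))"
    by (rule summable_comparison_test'[OF summable_geometric[of "norm B"]]) (use assms pow_le in auto)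
  then have sums: "blinfun_pow B sums (\<Sum>n. blinfun_pow B n)"
    by (intro summable_sums summable_blinfun_norm_cancel)
  have norm_pow_lim: "(\<lambda>n. norm (blinfun_pow B n)) \<longlonglongrightarrow> 0"
    by (rule Lim_null_comparison[where g = "\<lambda>n. norm B ^ n"])
      (use assms pow_le in \<open>auto intro!: LIMSEQ_power_zero\<close>)
  have telescope: "(\<lambda>n. blinfun_pow B n - blinfun_pow B (Suc n)) sums id_blinfun"
    using telescope_sums'[OF tendsto_norm_zero_cancel[OF norm_pow_lim]] by simp
  have "(\<lambda>n. (id_blinfun - B) o\<^sub>L blinfun_pow B n) sums ((id_blinfun - B) o\<^sub>L (\<Sum>n. blinfun_pow B n))"
    by (rule bounded_linear.sums[OF bounded_bilinear.bounded_linear_right[OF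
          bounded_bilinear_blinfun_compose] sums])
  moreover have "(\<lambda>n. (id_blinfun - B) o\<^sub>L blinfun_pow B n) = (\<lambda>n. blinfun_pow B n - blinfun_pow B (Suc n))"
    by (simp add: blinfun_compose_simps)
  ultimately show "(id_blinfun - B) o\<^sub>L (\<Sum>n. blinfun_pow B n) = id_blinfun"
    using telescope sums_unique2 by metis
  have "(\<lambda>n. blinfun_pow B n o\<^sub>L (id_blinfun - B)) sums ((\<Sum>n. blinfun_pow B n) o\<^sub>L (id_blinfun - B))"
    by (rule bounded_linear.sums[OF bounded_bilinear.bounded_linear_left[OF
          bounded_bilinear_blinfun_compose] sums])
  moreover have "(\<lambda>n. blinfun_pow B n o\<^sub>L (id_blinfun - B)) = (\<lambda>n. blinfun_pow B n - blinfun_pow B (Suc n))"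
    using blinfun_pow_commute[of B B] by (simp add: blinfun_compose_simps)
  ultimately show "(\<Sum>n. blinfun_pow B n) o\<^sub>L (id_blinfun - B) = id_blinfun"
    using telescope sums_unique2 by metis
qed

lemma op_inv_eqI:
  assumes "A o\<^sub>L B = id_blinfun" and "B o\<^sub>L A = id_blinfun"
  shows "op_inv A = B"
  unfolding op_inv_def
proof (rule the_equality)
  fix C assume "A o\<^sub>L C = id_blinfun \<and> C o\<^sub>L A = id_blinfun"
  then have "C = (B o\<^sub>L A) o\<^sub>L C" using assms by simp
  then show "C = B"
    using \<open>A o\<^sub>L C = id_blinfun \<and> C o\<^sub>L A = id_blinfun\<close> by (simp add: blinfun_compose_assoc)
qed (use assms in simp)

lemma pos_op_inverse:
  assumes "pos_op Z" and inverse: "Z o\<^sub>L V = id_blinfun"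
  shows "pos_op V"
proof -
  have Z_V: "Z (V x) = x" for x
    using inverse by (metis blinfun_apply_blinfun_compose blinfun_apply_id_blinfun)
  have "inner (V x) y = inner x (V y)" for x y
    using self_adjointD[OF pos_op_self_adjoint[OF assms(1)], of "V x" "V y"] by (simp add: Z_V)
  moreover have "0 \<le> inner (V x) x" for x
    using pos_op_inner_nonneg[OF assms(1), of "V x"] by (simp add: Z_V inner_commute)
  ultimately show ?thesis by (simp add: pos_op_def self_adjoint_def)
qed

lemma op_inv_ge_id:
  fixes Z :: "'a::{real_inner,complete_space} \<Rightarrow>\<^sub>L 'a"
  assumes "self_adjoint Z" and lower: "\<And>x. (norm x)\<^sup>2 \<le> inner (Z x) x"
  shows "Z o\<^sub>L op_inv Z = id_blinfun" and "pos_op (op_inv Z)"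
proof -
  define a where "a = norm Z + 1"
  have "a \<ge> 1" unfolding a_def by simp
  define B where "B = id_blinfun - (1 / a) *\<^sub>R Z"
  have inner_B: "inner (B x) x = (norm x)\<^sup>2 - inner (Z x) x / a" for x
    by (simp add: B_def blinfun.diff_left blinfun.scaleR_left inner_diff_left power2_norm_eq_inner)
  have "pos_op B"
    unfolding B_def using \<open>a \<ge> 1\<close> by (intro pos_op_id_minus_scaled \<open>self_adjoint Z\<close>) (simp_all add: a_def add_nonneg_pos)
  moreover have "inner (B x) x \<le> (1 - 1 / a) * (norm x)\<^sup>2" for x
    using divide_right_mono[OF lower[of x], of a] \<open>a \<ge> 1\<close>
    by (simp add: inner_B algebra_simps)
  ultimately have "norm B \<le> 1 - 1 / a"
    using \<open>a \<ge> 1\<close> by (intro pos_op_norm_le) auto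
  moreover have "1 / a > 0" using \<open>a \<ge> 1\<close> by simp
  ultimately have "norm B < 1" by linarith
  have Z_eq: "Z = a *\<^sub>R (id_blinfun - B)" using \<open>a \<ge> 1\<close> by (simp add: B_def)
  define V where "V = (1 / a) *\<^sub>R (\<Sum>n. blinfun_pow B n)"
  have "Z o\<^sub>L V = (a * (1 / a)) *\<^sub>R ((id_blinfun - B) o\<^sub>L (\<Sum>n. blinfun_pow B n))"
    and "V o\<^sub>L Z = (a * (1 / a)) *\<^sub>R ((\<Sum>n. blinfun_pow B n) o\<^sub>L (id_blinfun - B))"
    by (simp_all only: Z_eq V_def blinfun_compose_simps(5,6) scaleR_scaleR mult.commute)
  then have "Z o\<^sub>L V = id_blinfun" and "V o\<^sub>L Z = id_blinfun"
    using neumann_series[OF \<open>norm B < 1\<close>] \<open>a \<ge> 1\<close> by simp_all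
  then have "op_inv Z = V" by (rule op_inv_eqI)
  then show "Z o\<^sub>L op_inv Z = id_blinfun" using \<open>Z o\<^sub>L V = id_blinfun\<close> by simp
  have "pos_op Z"
    using lower order_trans[OF zero_le_power2] \<open>self_adjoint Z\<close> by (auto simp: pos_op_def)
  then show "pos_op (op_inv Z)"
    using \<open>Z o\<^sub>L V = id_blinfun\<close> \<open>op_inv Z = V\<close> by (simp add: pos_op_inverse)
qed

lemma pos_op_norm_apply_lt:
  fixes E :: "'a::real_inner \<Rightarrow>\<^sub>L 'a"
  assumes "pos_op E" and "0 < e" and "inner (E u) u < e\<^sup>2 / (norm E + 1)"
  shows "norm (E u) < e"
proof -
  have "(norm (E u))\<^sup>2 \<le> norm E * inner (E u) u"
    by (rule pos_op_norm_apply_sq_le[OF assms(1) norm_ge_zero inner_apply_le_norm])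
  also have "\<dots> \<le> norm E * (e\<^sup>2 / (norm E + 1))" using assms(3) by (intro mult_left_mono) auto
  also have "\<dots> = e\<^sup>2 * (norm E / (norm E + 1))" by simp
  also have "\<dots> < e\<^sup>2 * 1"
    using \<open>0 < e\<close> by (intro mult_strict_left_mono) (simp_all add: add_nonneg_pos)
  finally show ?thesis using \<open>0 < e\<close> by (simp add: power2_less_imp_less)
qed

lemma self_adjoint_neg_approx_eigenvalue:
  fixes D :: "'a::real_inner \<Rightarrow>\<^sub>L 'a"
  assumes "self_adjoint D" and "inner (D x) x < 0"
  obtains m where "m < 0" and "\<And>e. 0 < e \<Longrightarrow> \<exists>u. norm u = 1 \<and> norm (D u - m *\<^sub>R u) < e"
proof -
  have "x \<noteq> 0" using assms(2) by auto
  have unit_inner: "inner (D y) y = (norm y)\<^sup>2 * inner (D (y /\<^sub>R norm y)) (y /\<^sub>R norm y)" if "y \<noteq> 0" for y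
    using that by (simp add: blinfun.scaleR_right power2_eq_square field_simps)
  define V where "V = {inner (D u) u | u. norm u = 1}"
  have "V \<noteq> {}" using \<open>x \<noteq> 0\<close> unfolding V_def by (auto intro!: exI[of _ "x /\<^sub>R norm x"])
  have "bdd_below V"
  proof (rule bdd_belowI)
    fix v assume "v \<in> V"
    then obtain u where u: "norm u = 1" "v = inner (D u) u" unfolding V_def by blast
    have "- inner (D u) u \<le> norm (D u) * norm u"
      using norm_cauchy_schwarz[of "- D u" u] by simp
    also have "\<dots> \<le> norm D" using norm_blinfun[of D u] u by simp
    finally show "- norm D \<le> v" using u by simp
  qed
  define m where "m = Inf V"
  have m_le: "m \<le> inner (D u) u" if "norm u = 1" for u
    unfolding m_def by (rule cInf_lower[OF _ \<open>bdd_below V\<close>]) (use that in \<open>auto simp: V_def\<close>)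
  have "m < 0"
  proof -
    define u where "u = x /\<^sub>R norm x"
    have "norm u = 1" using \<open>x \<noteq> 0\<close> by (simp add: u_def)
    moreover have "(norm x)\<^sup>2 * inner (D u) u < 0"
      using unit_inner[OF \<open>x \<noteq> 0\<close>, folded u_def] assms(2) by simp
    ultimately show ?thesis using m_le[of u] by (auto simp: mult_less_0_iff)
  qed
  define E where "E = D - m *\<^sub>R id_blinfun"
  have inner_E: "inner (E y) y = inner (D y) y - m * (norm y)\<^sup>2" for y
    by (simp add: E_def blinfun.diff_left blinfun.scaleR_left inner_diff_left power2_norm_eq_inner)
  have "0 \<le> inner (E y) y" for y
  proof (cases "y = 0")
    case False
    then show ?thesis
      using m_le[of "y /\<^sub>R norm y"] unit_inner[OF False] by (simp add: inner_E right_diff_distrib[symmetric])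
  qed simp
  moreover have "self_adjoint E"
    unfolding E_def by (intro self_adjoint_diff self_adjoint_scaleR self_adjoint_id assms(1))
  ultimately have "pos_op E" by (simp add: pos_op_def)
  show ?thesis
  proof (rule that[OF \<open>m < 0\<close>])
    fix e :: real
    assume "0 < e"
    define d where "d = e\<^sup>2 / (norm E + 1)"
    have "0 < d" using \<open>0 < e\<close> by (simp add: d_def add_nonneg_pos)
    then have "Inf V < m + d" by (simp add: m_def)
    then obtain u where u: "norm u = 1" and "inner (D u) u < m + d"
      using cInf_less_iff[OF \<open>V \<noteq> {}\<close> \<open>bdd_below V\<close>] by (auto simp: V_def)
    then have "inner (E u) u < d" by (simp add: inner_E)
    then have "norm (E u) < e"
      unfolding d_def by (rule pos_op_norm_apply_lt[OF \<open>pos_op E\<close> \<open>0 < e\<close>])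
    then show "\<exists>u. norm u = 1 \<and> norm (D u - m *\<^sub>R u) < e"
      using u by (auto simp: E_def blinfun.diff_left blinfun.scaleR_left)
  qed
qed

text \<open>Operator monotonicity of the square root (the lower bound [\<delta>] makes the argument
  quantitative): if [Q - P] were not positive, an approximate eigenvector [u] of [Q - P] for a
  negative value [m] would give
  [|Q u|^2 - |P u|^2 = <(Q - P) u, (P + Q) u> \<approx> m <(P + Q) u, u> \<le> m \<delta> < 0].\<close>

lemma op_le_of_norm_apply_le:
  fixes P Q :: "'a::real_inner \<Rightarrow>\<^sub>L 'a"
  assumes P: "pos_op P" and Q: "pos_op Q" and "0 < \<delta>"
    and lower: "\<And>x. \<delta> * (norm x)\<^sup>2 \<le> inner ((P + Q) x) x"
    and norm_le: "\<And>x. norm (P x) \<le> norm (Q x)"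
  shows "op_le P Q"
proof -
  define D where "D = Q - P"
  have "self_adjoint D" unfolding D_def by (intro self_adjoint_diff pos_op_self_adjoint P Q)
  have "0 \<le> inner (D x) x" for x
  proof (rule ccontr)
    assume "\<not> 0 \<le> inner (D x) x"
    then have "inner (D x) x < 0" by simp
    then obtain m where "m < 0"
      and approx: "\<And>e. 0 < e \<Longrightarrow> \<exists>u. norm u = 1 \<and> norm (D u - m *\<^sub>R u) < e"
      by (rule self_adjoint_neg_approx_eigenvalue[OF \<open>self_adjoint D\<close>]) blast
    define K where "K = norm (P + Q)"
    define e where "e = - m * \<delta> / (K + 1)"
    have "0 \<le> K" by (simp add: K_def)
    have "0 < e"
      using \<open>m < 0\<close> \<open>0 < \<delta>\<close> \<open>0 \<le> K\<close> by (simp add: e_def divide_neg_pos mult_neg_pos)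
    then obtain u where u: "norm u = 1" and close: "norm (D u - m *\<^sub>R u) < e"
      using approx by blast
    have "0 \<le> (norm (Q u))\<^sup>2 - (norm (P u))\<^sup>2"
      using norm_le[of u] by (simp add: power_mono)
    also have "\<dots> = inner (D u) ((P + Q) u)"
      using inner_commute[of "P u" "Q u"]
      by (simp add: D_def blinfun.diff_left blinfun.add_left inner_diff_left inner_add_right
          power2_norm_eq_inner)
    also have "\<dots> = m * inner u ((P + Q) u) + inner (D u - m *\<^sub>R u) ((P + Q) u)"
      by (simp add: inner_diff_left)
    also have "\<dots> < m * \<delta> + - m * \<delta>"
    proof (rule add_le_less_mono)
      show "m * inner u ((P + Q) u) \<le> m * \<delta>"
        using lower[of u] u \<open>m < 0\<close> by (simp add: inner_commute mult_left_mono_neg)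
      have "inner (D u - m *\<^sub>R u) ((P + Q) u) \<le> norm (D u - m *\<^sub>R u) * norm ((P + Q) u)"
        by (rule norm_cauchy_schwarz)
      also have "\<dots> \<le> e * K"
        using close norm_blinfun[of "P + Q" u] u \<open>0 < e\<close> \<open>0 \<le> K\<close> unfolding K_def
        by (intro mult_mono) auto
      also have "\<dots> < e * (K + 1)" using \<open>0 < e\<close> by simp
      also have "\<dots> = - m * \<delta>" using \<open>0 \<le> K\<close> by (simp add: e_def)
      finally show "inner (D u - m *\<^sub>R u) ((P + Q) u) < - m * \<delta>" .
    qed
    finally show False by simp
  qed
  then show ?thesis
    using \<open>self_adjoint D\<close> by (simp add: op_le_def pos_op_def D_def)
qed

section \<open>The bound\<close>

lemma op_le_inner_le: "op_le A B \<Longrightarrow> inner (A x) x \<le> inner (B x) x"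
  using pos_op_inner_nonneg[of "B - A" x] by (simp add: op_le_def blinfun.diff_left inner_diff_left)

lemma
  fixes Y :: "'a::{real_inner,complete_space} \<Rightarrow>\<^sub>L 'a"
  assumes "pos_op Y"
  shows pos_op_op_sqrt_id_plus: "pos_op (op_sqrt (id_blinfun + Y))"
    and norm_op_sqrt_id_plus_apply: "(norm (op_sqrt (id_blinfun + Y) x))\<^sup>2 = (norm x)\<^sup>2 + inner (Y x) x"
proof -
  have "pos_op (id_blinfun + Y)" by (intro pos_op_add pos_op_id assms)
  then show R: "pos_op (op_sqrt (id_blinfun + Y))" by (rule pos_op_op_sqrt)
  show "(norm (op_sqrt (id_blinfun + Y) x))\<^sup>2 = (norm x)\<^sup>2 + inner (Y x) x"
    unfolding norm_apply_sq_eq_inner_square[OF pos_op_self_adjoint[OF R]]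
      op_sqrt_square[OF \<open>pos_op (id_blinfun + Y)\<close>]
    by (simp add: blinfun.add_left inner_add_left power2_norm_eq_inner)
qed

lemma op_sqrt_id_plus_ge_id:
  fixes Y :: "'a::{real_inner,complete_space} \<Rightarrow>\<^sub>L 'a"
  assumes Y: "pos_op Y"
  shows "op_le id_blinfun (op_sqrt (id_blinfun + Y))"
proof (rule op_le_of_norm_apply_le[OF pos_op_id pos_op_op_sqrt_id_plus[OF Y] zero_less_one])
  show "1 * (norm x)\<^sup>2 \<le> inner ((id_blinfun + op_sqrt (id_blinfun + Y)) x) x" for x
    using pos_op_inner_nonneg[OF pos_op_op_sqrt_id_plus[OF Y], of x]
    by (simp add: blinfun.add_left inner_add_left power2_norm_eq_inner)
  show "norm (id_blinfun x) \<le> norm (op_sqrt (id_blinfun + Y) x)" for x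
    using norm_op_sqrt_id_plus_apply[OF Y, of x] pos_op_inner_nonneg[OF Y, of x]
    by (auto intro: power2_le_imp_le)
qed

text \<open>By operator monotonicity of the square root it suffices to compare squares, and the bounds
  [|C^(1/2) w|^2 \<le> \<gamma> |w|^2], [|X z|^2 \<le> \<gamma> <X z, z>] produce exactly the factor [\<gamma>^2].\<close>

lemma sandwich_op_sqrt_le:
  fixes C X :: "'a::{real_inner,complete_space} \<Rightarrow>\<^sub>L 'a"
  assumes C: "pos_op C" "op_le C (\<gamma> *\<^sub>R id_blinfun)"
    and X: "pos_op X" "op_le X (\<gamma> *\<^sub>R id_blinfun)" and "0 < \<gamma>"
  shows "op_le (op_sqrt C o\<^sub>L op_sqrt (id_blinfun + c\<^sup>2 *\<^sub>R (X o\<^sub>L X)) o\<^sub>L op_sqrt C)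
    (\<gamma> *\<^sub>R op_sqrt (id_blinfun + c\<^sup>2 *\<^sub>R (op_sqrt C o\<^sub>L X o\<^sub>L op_sqrt C)))"
proof -
  define A where "A = op_sqrt C"
  define R where "R = op_sqrt (id_blinfun + c\<^sup>2 *\<^sub>R (X o\<^sub>L X))"
  define R' where "R' = op_sqrt (id_blinfun + c\<^sup>2 *\<^sub>R (A o\<^sub>L X o\<^sub>L A))"
  have sA: "self_adjoint A" and sX: "self_adjoint X"
    unfolding A_def by (intro pos_op_self_adjoint pos_op_op_sqrt C X)+
  have XX: "pos_op (c\<^sup>2 *\<^sub>R (X o\<^sub>L X))" and AXA: "pos_op (c\<^sup>2 *\<^sub>R (A o\<^sub>L X o\<^sub>L A))"
    by (intro pos_op_scaleR pos_op_square pos_op_sandwich sA sX X(1) zero_le_power2)+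
  have R: "pos_op R" and R': "pos_op R'"
    unfolding R_def R'_def by (intro pos_op_op_sqrt_id_plus XX AXA)+
  have norm_A_le: "(norm (A y))\<^sup>2 \<le> \<gamma> * (norm y)\<^sup>2" for y
    unfolding norm_apply_sq_eq_inner_square[OF sA]
    using op_le_scaled_id_inner[OF C(2), of y] by (simp add: A_def op_sqrt_square[OF C(1)])
  have norm_R: "(norm (R z))\<^sup>2 = (norm z)\<^sup>2 + c\<^sup>2 * (norm (X z))\<^sup>2" for z
    unfolding R_def norm_op_sqrt_id_plus_apply[OF XX] norm_apply_sq_eq_inner_square[OF sX]
    by (simp add: blinfun.scaleR_left)
  have norm_R': "(norm (R' y))\<^sup>2 = (norm y)\<^sup>2 + c\<^sup>2 * inner (X (A y)) (A y)" for y
    unfolding R'_def norm_op_sqrt_id_plus_apply[OF AXA]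
    using self_adjointD[OF sA, of "X (A y)" y] by (simp add: blinfun.scaleR_left)
  have norm_X_le: "(norm (X z))\<^sup>2 \<le> \<gamma> * inner (X z) z" for z
    using \<open>0 < \<gamma>\<close> by (intro pos_op_norm_apply_sq_le X(1) op_le_scaled_id_inner[OF X(2)]) simp
  have "op_le (A o\<^sub>L R o\<^sub>L A) (\<gamma> *\<^sub>R R')"
  proof (rule op_le_of_norm_apply_le[OF pos_op_sandwich[OF sA R] pos_op_scaleR[OF R'] \<open>0 < \<gamma>\<close>])
    show "0 \<le> \<gamma>" using \<open>0 < \<gamma>\<close> by simp
    fix x
    have "\<gamma> * (norm x)\<^sup>2 \<le> \<gamma> * inner (R' x) x"
      using op_le_inner_le[OF op_sqrt_id_plus_ge_id[OF AXA], of x] \<open>0 < \<gamma>\<close>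
      by (simp add: R'_def power2_norm_eq_inner)
    then show "\<gamma> * (norm x)\<^sup>2 \<le> inner (((A o\<^sub>L R o\<^sub>L A) + \<gamma> *\<^sub>R R') x) x"
      using pos_op_inner_nonneg[OF pos_op_sandwich[OF sA R], of x]
      by (simp add: blinfun.add_left blinfun.scaleR_left inner_add_left)
    have "(norm ((A o\<^sub>L R o\<^sub>L A) x))\<^sup>2 \<le> \<gamma> * (norm (R (A x)))\<^sup>2"
      using norm_A_le[of "R (A x)"] by simp
    also have "\<dots> = \<gamma> * ((norm (A x))\<^sup>2 + c\<^sup>2 * (norm (X (A x)))\<^sup>2)" by (simp add: norm_R)
    also have "\<dots> \<le> \<gamma> * (\<gamma> * (norm x)\<^sup>2 + c\<^sup>2 * (\<gamma> * inner (X (A x)) (A x)))"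
      using add_mono[OF norm_A_le[of x] mult_left_mono[OF norm_X_le[of "A x"] zero_le_power2]] \<open>0 < \<gamma>\<close>
      by (simp add: mult_left_mono)
    also have "\<dots> = \<gamma>\<^sup>2 * ((norm x)\<^sup>2 + c\<^sup>2 * inner (X (A x)) (A x))"
      by (simp add: power2_eq_square algebra_simps)
    also have "\<dots> = (norm ((\<gamma> *\<^sub>R R') x))\<^sup>2"
      by (simp add: norm_R' blinfun.scaleR_left power_mult_distrib)
    finally show "norm ((A o\<^sub>L R o\<^sub>L A) x) \<le> norm ((\<gamma> *\<^sub>R R') x)"
      by (rule power2_le_imp_le) simp
  qed
  then show ?thesis by (simp add: A_def R_def R'_def)
qed

lemma sandwich_inverse_bounds:
  fixes T A Z V :: "'a::real_inner \<Rightarrow>\<^sub>L 'a"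
  assumes sT: "self_adjoint T" and sA: "self_adjoint A"
    and inverse: "Z o\<^sub>L V = id_blinfun" and V: "pos_op V" and "0 \<le> \<gamma>"
    and key: "\<And>y. (norm (T (A y)))\<^sup>2 \<le> \<gamma> * inner (Z y) y"
  shows "pos_op (T o\<^sub>L (A o\<^sub>L V o\<^sub>L A) o\<^sub>L T) \<and> op_le (T o\<^sub>L (A o\<^sub>L V o\<^sub>L A) o\<^sub>L T) (\<gamma> *\<^sub>R id_blinfun)"
proof -
  have sV: "self_adjoint V" by (rule pos_op_self_adjoint[OF V])
  have bounds: "0 \<le> inner ((T o\<^sub>L (A o\<^sub>L V o\<^sub>L A) o\<^sub>L T) x) x
      \<and> inner ((T o\<^sub>L (A o\<^sub>L V o\<^sub>L A) o\<^sub>L T) x) x \<le> \<gamma> * (norm x)\<^sup>2" for x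
  proof -
    define u where "u = A (T x)"
    define y where "y = V u"
    define q where "q = inner ((T o\<^sub>L (A o\<^sub>L V o\<^sub>L A) o\<^sub>L T) x) x"
    have q_yu: "q = inner y u"
      unfolding q_def y_def u_def using self_adjointD[OF sT] self_adjointD[OF sA] by simp
    have "0 \<le> q" unfolding q_yu y_def by (rule pos_op_inner_nonneg[OF V])
    have "Z y = u" unfolding y_def using inverse by (metis blinfun_apply_blinfun_compose blinfun_apply_id_blinfun)
    then have q_Z: "q = inner (Z y) y" by (simp add: q_yu inner_commute)
    have "q = inner (T (A y)) x"
      unfolding q_yu u_def using self_adjointD[OF sA] self_adjointD[OF sT] by simp
    then have "q \<le> norm (T (A y)) * norm x" by (simp add: norm_cauchy_schwarz)
    then have "q\<^sup>2 \<le> (norm (T (A y)))\<^sup>2 * (norm x)\<^sup>2"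
      using \<open>0 \<le> q\<close> by (metis power_mono power_mult_distrib)
    also have "\<dots> \<le> (\<gamma> * q) * (norm x)\<^sup>2" unfolding q_Z by (rule mult_right_mono[OF key]) simp
    finally have "q * q \<le> (\<gamma> * (norm x)\<^sup>2) * q" by (simp add: power2_eq_square ac_simps)
    then have "q \<le> \<gamma> * (norm x)\<^sup>2"
      using \<open>0 \<le> q\<close> \<open>0 \<le> \<gamma>\<close> by (cases "q = 0") (auto simp: mult_le_cancel_right)
    with \<open>0 \<le> q\<close> show ?thesis by (simp add: q_def)
  qed
  have "self_adjoint (T o\<^sub>L (A o\<^sub>L V o\<^sub>L A) o\<^sub>L T)"
    by (intro self_adjoint_sandwich sT sA sV)
  with bounds show ?thesis by (simp add: pos_op_def op_le_scaled_id_iff)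
qed

lemma opF_term_bounds:
  fixes C X :: "'a::{real_inner,complete_space} \<Rightarrow>\<^sub>L 'a" and c :: real
  assumes C: "pos_op C" "op_le C (\<gamma> *\<^sub>R id_blinfun)"
    and X: "pos_op X" "op_le X (\<gamma> *\<^sub>R id_blinfun)" and "0 < \<gamma>"
  defines "T \<equiv> op_sqrt (id_blinfun + op_sqrt (id_blinfun + c\<^sup>2 *\<^sub>R (X o\<^sub>L X)))"
    and "Z \<equiv> id_blinfun + op_sqrt (id_blinfun + c\<^sup>2 *\<^sub>R (op_sqrt C o\<^sub>L X o\<^sub>L op_sqrt C))"
  shows "pos_op (T o\<^sub>L (op_sqrt C o\<^sub>L op_inv Z o\<^sub>L op_sqrt C) o\<^sub>L T)
    \<and> op_le (T o\<^sub>L (op_sqrt C o\<^sub>L op_inv Z o\<^sub>L op_sqrt C) o\<^sub>L T) (\<gamma> *\<^sub>R id_blinfun)"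
proof -
  define A where "A = op_sqrt C"
  define R where "R = op_sqrt (id_blinfun + c\<^sup>2 *\<^sub>R (X o\<^sub>L X))"
  define R' where "R' = op_sqrt (id_blinfun + c\<^sup>2 *\<^sub>R (A o\<^sub>L X o\<^sub>L A))"
  have A: "pos_op A" "A o\<^sub>L A = C" unfolding A_def by (rule pos_op_op_sqrt[OF C(1)], rule op_sqrt_square[OF C(1)])
  have sA: "self_adjoint A" by (rule pos_op_self_adjoint[OF A(1)])
  have R: "pos_op R"
    unfolding R_def
    by (intro pos_op_op_sqrt_id_plus pos_op_scaleR pos_op_square pos_op_self_adjoint X zero_le_power2)
  then have "pos_op (id_blinfun + R)" by (intro pos_op_add pos_op_id)
  then have T: "pos_op T" "T o\<^sub>L T = id_blinfun + R"
    unfolding T_def R_def[symmetric] by (rule pos_op_op_sqrt, rule op_sqrt_square)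
  have R': "pos_op R'"
    unfolding R'_def by (intro pos_op_op_sqrt_id_plus pos_op_scaleR pos_op_sandwich sA X(1) zero_le_power2)
  have Z_eq: "Z = id_blinfun + R'" by (simp add: Z_def R'_def A_def)
  have "self_adjoint Z" unfolding Z_eq by (intro self_adjoint_add self_adjoint_id pos_op_self_adjoint R')
  moreover have inner_Z: "inner (Z y) y = (norm y)\<^sup>2 + inner (R' y) y" for y
    by (simp add: Z_eq blinfun.add_left inner_add_left power2_norm_eq_inner)
  then have "(norm y)\<^sup>2 \<le> inner (Z y) y" for y using pos_op_inner_nonneg[OF R'] by simp
  ultimately have Z_inv: "Z o\<^sub>L op_inv Z = id_blinfun" "pos_op (op_inv Z)"
    by (rule op_inv_ge_id)+
  have "(norm (T (A y)))\<^sup>2 \<le> \<gamma> * inner (Z y) y" for y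
  proof -
    have "(norm (T (A y)))\<^sup>2 = inner (C y) y + inner ((A o\<^sub>L R o\<^sub>L A) y) y"
      unfolding norm_apply_sq_eq_inner_square[OF pos_op_self_adjoint[OF T(1)]] T(2)
      using self_adjointD[OF sA, of "A y" y] self_adjointD[OF sA, of "R (A y)" y]
      by (simp add: A(2)[symmetric] blinfun.add_left inner_add_left)
    also have "\<dots> \<le> \<gamma> * (norm y)\<^sup>2 + \<gamma> * inner (R' y) y"
      using op_le_scaled_id_inner[OF C(2), of y]
        op_le_inner_le[OF sandwich_op_sqrt_le[OF C X \<open>0 < \<gamma>\<close>, of c], of y]
      by (simp add: A_def R_def R'_def blinfun.scaleR_left)
    also have "\<dots> = \<gamma> * inner (Z y) y" by (simp add: inner_Z algebra_simps)
    finally show ?thesis .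
  qed
  then show ?thesis
    unfolding A_def[symmetric]
    by (rule sandwich_inverse_bounds[OF pos_op_self_adjoint[OF T(1)] sA Z_inv less_imp_le[OF \<open>0 < \<gamma>\<close>]])
qed

lemma opF_bounds:
  fixes C :: "nat \<Rightarrow> ('a::{real_inner,complete_space} \<Rightarrow>\<^sub>L 'a)"
  assumes w_nonneg: "\<And>i. i \<in> {1..N} \<Longrightarrow> 0 \<le> w i" and w_sum: "(\<Sum>i=1..N. w i) = 1"
    and "0 < \<gamma>"
    and C: "\<And>i. i \<in> {1..N} \<Longrightarrow> pos_op (C i) \<and> op_le (C i) (\<gamma> *\<^sub>R id_blinfun)"
    and X: "pos_op X" "op_le X (\<gamma> *\<^sub>R id_blinfun)"
  shows "pos_op (opF c N w C X) \<and> op_le (opF c N w C X) (\<gamma> *\<^sub>R id_blinfun)"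
proof -
  define T where "T = op_sqrt (id_blinfun + op_sqrt (id_blinfun + c\<^sup>2 *\<^sub>R (X o\<^sub>L X)))"
  define M where "M i = op_sqrt (C i) o\<^sub>L
    op_inv (id_blinfun + op_sqrt (id_blinfun + c\<^sup>2 *\<^sub>R (op_sqrt (C i) o\<^sub>L X o\<^sub>L op_sqrt (C i))))
    o\<^sub>L op_sqrt (C i)" for i
  have "opF c N w C X = (\<Sum>i=1..N. w i *\<^sub>R (T o\<^sub>L M i o\<^sub>L T))"
    by (simp add: opF_def Let_def T_def M_def blinfun_compose_simps)
  moreover have "pos_op (\<Sum>i=1..N. w i *\<^sub>R (T o\<^sub>L M i o\<^sub>L T))
      \<and> op_le (\<Sum>i=1..N. w i *\<^sub>R (T o\<^sub>L M i o\<^sub>L T)) (\<gamma> *\<^sub>R id_blinfun)"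
  proof (rule op_le_convex_combination[OF w_nonneg w_sum])
    fix i assume "i \<in> {1..N}"
    from C[OF this] show "pos_op (T o\<^sub>L M i o\<^sub>L T) \<and> op_le (T o\<^sub>L M i o\<^sub>L T) (\<gamma> *\<^sub>R id_blinfun)"
      using opF_term_bounds[OF _ _ X \<open>0 < \<gamma>\<close>] by (simp add: T_def M_def)
  qed
  ultimately show ?thesis by simp
qed

theorem mainTheorem17:
  fixes \<epsilon> \<gamma> :: real and N :: nat and w :: "nat \<Rightarrow> real"
    and C :: "nat \<Rightarrow> ('a::{real_inner, complete_space} \<Rightarrow>\<^sub>L 'a)"
    and X :: "'a \<Rightarrow>\<^sub>L 'a"
  assumes sep: "separable_space (euclidean :: 'a topology)"
    and eps: "\<epsilon> > 0"
    and w_pos: "\<And>i. i \<in> {1..N} \<Longrightarrow> w i > 0"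
    and w_sum: "(\<Sum>i=1..N. w i) = 1"
    and gam: "\<gamma> > 0"
    and C_pos: "\<And>i. i \<in> {1..N} \<Longrightarrow> pos_op (C i)"
    and C_le: "\<And>i. i \<in> {1..N} \<Longrightarrow> op_le (C i) (\<gamma> *\<^sub>R id_blinfun)"
    and X_pos: "pos_op X"
    and X_le: "op_le X (\<gamma> *\<^sub>R id_blinfun)"
    and cases: "strictly_pos X \<or> (compact_op X \<and> (\<forall>i\<in>{1..N}. compact_op (C i)))"
  shows "pos_op (opF (4 / \<epsilon>) N w C X) \<and> op_le (opF (4 / \<epsilon>) N w C X) (\<gamma> *\<^sub>R id_blinfun)"
  using w_pos C_pos C_le by (intro opF_bounds w_sum gam X_pos X_le) (auto intro: less_imp_le)

end
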